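(* Let $B=(B_t)_{t\ge 0}$ be a standard Brownian motion with $B_0=0$ and let $c>0$. Define stopping times $(T_m)_{m\ge 0}$ and a process $U=(U_t)_{t\ge0}$ as follows. On the event $A$ that $B$ reaches $c$ before $-c$: $T_0=\inf\{t\ge0: B_t=c\}$; for $k\ge0$, $T_{2k+1}$ is the first time $t\ge T_{2k}$ with $B_t-\sup_{T_{2k}\le s\le t}B_s=-2c$, and $T_{2k+2}$ is the first time $t\ge T_{2k+1}$ with $B_t-\inf_{T_{2k+1}\le s\le t}B_s=2c$. Set $U_t=0$ for $0\le t\le T_0$; $U_t=\sup_{T_{2k}\le s\le t}B_s-c$ for $T_{2k}<t\le T_{2k+1}$; $U_t=\inf_{T_{2k+1}\le s\le t}B_s+c$ for $T_{2k+1}<t\le T_{2k+2}$ ($k\ge 0$). On the complementary event $A^c$ ($B$ reaches $-c$ before $c$): $T_0=\inf\{t\ge0: B_t=-c\}$; for $k\ge0$, $T_{2k+1}$ is the first time $t\ge T_{2k}$ with $B_t-\inf_{T_{2k}\le s\le t}B_s=2c$, and $T_{2k+2}$ is the first time $t\ge T_{2k+1}$ with $B_t-\sup_{T_{2k+1}\le s\le t}B_s=-2c$. Set $U_t=0$ for $0\le t\le T_0$; $U_t=\inf_{T_{2k}\le s\le t}B_s+c$ for $T_{2k}<t\le T_{2k+1}$; $U_t=\sup_{T_{2k+1}\le s\le t}B_s-c$ for $T_{2k+1}<t\le T_{2k+2}$ ($k\ge0$). Then (almost surely) $U$ is the only continuous process with finite variation satisfying: (a) $U_0=0$; (b) $B_t-c\le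 U_t\le B_t+c$ for all $t\ge0$; (c) $U$ is nondecreasing on every interval on which $U<B+c$ strictly; (d) $U$ is nonincreasing on every interval on which $U>B-c$ strictly. (In particular $U$ is constant on intervals where $B-c<U<B+c$.)
   Context: Here $B_t$ models the logarithm of a reference market price $p=\exp B$, $U_t$ the logarithm of an automated-market-maker price, and $c=\log(\gamma^{-1})$ for a fee parameter $\gamma\in(0,1)$. The stopping times $T_m$ are almost surely finite for every $m$. *)

theory Defs
  imports "HOL-Probability.Probability"
begin

definition bounded_variation_on :: "(real \<Rightarrow> real) \<Rightarrow> real \<Rightarrow> real \<Rightarrow> bool" where
  "bounded_variation_on f a b \<longleftrightarrow>
     (\<exists>K. \<forall>xs::real list. sorted xs \<and> set xs \<subseteq> {a..b} \<longrightarrow>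
        (\<Sum>i<length xs - 1. \<bar>f (xs ! Suc i) - f (xs ! i)\<bar>) \<le> K)"

definition finite_variation :: "(real \<Rightarrow> real) \<Rightarrow> bool" where
  "finite_variation f \<longleftrightarrow> (\<forall>T\<ge>0. bounded_variation_on f 0 T)"

definition reaches_c_first :: "(real \<Rightarrow> real) \<Rightarrow> real \<Rightarrow> bool" where
  "reaches_c_first b c \<longleftrightarrow> (\<exists>t\<ge>0. b t = c \<and> (\<forall>s\<in>{0..t}. b s \<noteq> - c))"

definition hit_set :: "(real \<Rightarrow> real) \<Rightarrow> real \<Rightarrow> real set" where
  "hit_set b a = {t. 0 \<le> t \<and> b t = a}"

definition drawdown_set :: "(real \<Rightarrow> real) \<Rightarrow> real \<Rightarrow> real \<Rightarrow> real set" where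
  "drawdown_set b c T = {t. T \<le> t \<and> b t - Sup (b ` {T..t}) = - 2 * c}"

definition drawup_set :: "(real \<Rightarrow> real) \<Rightarrow> real \<Rightarrow> real \<Rightarrow> real set" where
  "drawup_set b c T = {t. T \<le> t \<and> b t - Inf (b ` {T..t}) = 2 * c}"

text \<open>The stopping times T_m. The flag up says whether we are on A.
  On A, the step from T_m to T_{m+1} is a drawdown step iff m is even;
  on the complement of A it is a drawdown step iff m is odd.\<close>
primrec Tseq :: "bool \<Rightarrow> (real \<Rightarrow> real) \<Rightarrow> real \<Rightarrow> nat \<Rightarrow> real" where
  "Tseq up b c 0 = Inf (hit_set b (if up then c else - c))"
| "Tseq up b c (Suc m) =
     (if even m = up then Inf (drawdown_set b c (Tseq up b c m))
      else Inf (drawup_set b c (Tseq up b c m)))"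

definition T :: "(real \<Rightarrow> real) \<Rightarrow> real \<Rightarrow> nat \<Rightarrow> real" where
  "T b c = Tseq (reaches_c_first b c) b c"

text \<open>All T_m are finite: each defining set is nonempty.\<close>
definition T_finite :: "(real \<Rightarrow> real) \<Rightarrow> real \<Rightarrow> bool" where
  "T_finite b c \<longleftrightarrow>
     (let up = reaches_c_first b c in
       hit_set b (if up then c else - c) \<noteq> {} \<and>
       (\<forall>m. (if even m = up then drawdown_set b c (T b c m)
              else drawup_set b c (T b c m)) \<noteq> {}))"

definition U :: "(real \<Rightarrow> real) \<Rightarrow> real \<Rightarrow> real \<Rightarrow> real" where
  "U b c t =
     (if t \<le> T b c 0 then 0
      else (let m = (THE m. T b c m < t \<and> t \<le> T b c (Suc m)) in
            if even m = reaches_c_first b c then Sup (b ` {T b c m..t}) - c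
            else Inf (b ` {T b c m..t}) + c))"

definition play_props :: "(real \<Rightarrow> real) \<Rightarrow> real \<Rightarrow> (real \<Rightarrow> real) \<Rightarrow> bool" where
  "play_props b c V \<longleftrightarrow>
     continuous_on {0..} V \<and> finite_variation V \<and>
     V 0 = 0 \<and>
     (\<forall>t\<ge>0. b t - c \<le> V t \<and> V t \<le> b t + c) \<and>
     (\<forall>s t. 0 \<le> s \<longrightarrow> (\<forall>r\<in>{s..t}. V r < b r + c) \<longrightarrow> mono_on {s..t} V) \<and>
     (\<forall>s t. 0 \<le> s \<longrightarrow> (\<forall>r\<in>{s..t}. V r > b r - c) \<longrightarrow> antimono_on {s..t} V)"

end

theory Submission
  imports Defs
begin

text \<open>On \<open>[0, T\<^sub>0]\<close> the path stays in \<open>[-c, c]\<close> and \<open>U = 0\<close>. On a phase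
  \<open>[T\<^sub>m, T\<^sub>m\<^sub>+\<^sub>1]\<close>, \<open>U\<close> is, up to sign, the running maximum of \<open>\<plusminus>B\<close> started at
  \<open>T\<^sub>m\<close> and shifted by \<open>c\<close>, so it is continuous and monotone there; the gap between
  \<open>\<plusminus>B\<close> and its running maximum lies in \<open>[-2c, 0]\<close> until the drawdown of size \<open>2c\<close>
  that ends the phase, which gives \<open>B - c \<le> U \<le> B + c\<close>, and the running maximum only
  moves while \<open>U\<close> touches the barrier pushing it. Since each phase carries an
  oscillation of size \<open>2c\<close> of the continuous path, which is impossible near an
  accumulation point of the \<open>T\<^sub>m\<close>, the phases exhaust \<open>[0, \<infinity>)\<close>.
  Uniqueness follows from a comparison principle.\<close>

section \<open>Bounded variation\<close>

lemma bounded_variation_on_subinterval: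
  assumes "bounded_variation_on f a b" "a \<le> a'" "b' \<le> b"
  shows "bounded_variation_on f a' b'"
proof -
  have "{a'..b'} \<subseteq> {a..b}"
    using assms(2,3) by auto
  with assms(1) show ?thesis
    unfolding bounded_variation_on_def by (meson order_trans)
qed

lemma mono_on_imp_bounded_variation_on:
  assumes "mono_on {a..b} f"
  shows "bounded_variation_on f a b"
  unfolding bounded_variation_on_def
proof (intro exI allI impI)
  fix xs :: "real list"
  assume xs: "sorted xs \<and> set xs \<subseteq> {a..b}"
  define n where "n = length xs - 1"
  have mem: "xs ! i \<in> {a..b}" if "i < length xs" for i
    using xs that nth_mem by blast
  show "(\<Sum>i<length xs - 1. \<bar>f (xs ! Suc i) - f (xs ! i)\<bar>) \<le> \<bar>f b - f a\<bar>"
  proof (cases "xs = []")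
    case True
    then show ?thesis by simp
  next
    case False
    have step: "f (xs ! i) \<le> f (xs ! Suc i)" if "i < n" for i
    proof (rule mono_onD[OF assms])
      show "xs ! i \<in> {a..b}" "xs ! Suc i \<in> {a..b}"
        using that mem[of i] mem[of "Suc i"] by (simp_all add: n_def)
      show "xs ! i \<le> xs ! Suc i"
        using xs that by (auto simp: n_def intro!: sorted_nth_mono)
    qed
    have "(\<Sum>i<n. \<bar>f (xs ! Suc i) - f (xs ! i)\<bar>) = (\<Sum>i<n. f (xs ! Suc i) - f (xs ! i))"
      using step by (intro sum.cong) auto
    also have "\<dots> = f (xs ! n) - f (xs ! 0)"
      by (rule sum_lessThan_telescope)
    also have "\<dots> \<le> f b - f a"
    proof -
      have "xs ! 0 \<in> {a..b}" "xs ! n \<in> {a..b}"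
        using False mem[of 0] mem[of n] by (simp_all add: n_def)
      then have "f a \<le> f (xs ! 0)" "f (xs ! n) \<le> f b"
        by (auto intro!: mono_onD[OF assms])
      then show ?thesis by simp
    qed
    finally show ?thesis
      unfolding n_def by linarith
  qed
qed

lemma bounded_variation_on_uminus:
  "bounded_variation_on (\<lambda>t. - f t) a b \<longleftrightarrow> bounded_variation_on f a b"
proof -
  have "\<bar>- f y - - f x\<bar> = \<bar>f y - f x\<bar>" for x y
    by simp
  then show ?thesis
    unfolding bounded_variation_on_def by simp
qed

lemma antimono_on_imp_bounded_variation_on:
  assumes "antimono_on {a..b} f"
  shows "bounded_variation_on f a b"
proof -
  have "mono_on {a..b} (\<lambda>t. - f t)"
    using assms unfolding monotone_on_def by auto
  then have "bounded_variation_on (\<lambda>t. - f t) a b"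
    by (rule mono_on_imp_bounded_variation_on)
  then show ?thesis
    by (simp only: bounded_variation_on_uminus)
qed

lemma bounded_variation_on_add:
  assumes "bounded_variation_on f a b" "bounded_variation_on g a b"
  shows "bounded_variation_on (\<lambda>t. f t + g t) a b"
proof -
  obtain K1 K2 where
    K1: "\<And>xs. sorted xs \<and> set xs \<subseteq> {a..b} \<Longrightarrow>
      (\<Sum>i<length xs - 1. \<bar>f (xs ! Suc i) - f (xs ! i)\<bar>) \<le> K1" and
    K2: "\<And>xs. sorted xs \<and> set xs \<subseteq> {a..b} \<Longrightarrow>
      (\<Sum>i<length xs - 1. \<bar>g (xs ! Suc i) - g (xs ! i)\<bar>) \<le> K2"
    using assms unfolding bounded_variation_on_def by meson
  show ?thesis
    unfolding bounded_variation_on_def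
  proof (intro exI allI impI)
    fix xs :: "real list"
    assume xs: "sorted xs \<and> set xs \<subseteq> {a..b}"
    have "(\<Sum>i<length xs - 1. \<bar>f (xs ! Suc i) + g (xs ! Suc i) - (f (xs ! i) + g (xs ! i))\<bar>)
        \<le> (\<Sum>i<length xs - 1. \<bar>f (xs ! Suc i) - f (xs ! i)\<bar> + \<bar>g (xs ! Suc i) - g (xs ! i)\<bar>)"
      by (rule sum_mono) linarith
    also have "\<dots> \<le> K1 + K2"
      using K1[OF xs] K2[OF xs] by (simp add: sum.distrib)
    finally show "(\<Sum>i<length xs - 1.
        \<bar>f (xs ! Suc i) + g (xs ! Suc i) - (f (xs ! i) + g (xs ! i))\<bar>) \<le> K1 + K2" .
  qed
qed

lemma bounded_variation_on_diff_const:
  "bounded_variation_on (\<lambda>t. f t - k) a b \<longleftrightarrow> bounded_variation_on f a b"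
  unfolding bounded_variation_on_def by simp

lemma bounded_variation_on_compose_mono:
  assumes "bounded_variation_on f c d" "mono_on {a..b} h" "h ` {a..b} \<subseteq> {c..d}"
  shows "bounded_variation_on (\<lambda>t. f (h t)) a b"
proof -
  obtain K where K: "\<And>ys. sorted ys \<and> set ys \<subseteq> {c..d} \<Longrightarrow>
      (\<Sum>i<length ys - 1. \<bar>f (ys ! Suc i) - f (ys ! i)\<bar>) \<le> K"
    using assms(1) unfolding bounded_variation_on_def by meson
  show ?thesis
    unfolding bounded_variation_on_def
  proof (intro exI allI impI)
    fix xs :: "real list"
    assume xs: "sorted xs \<and> set xs \<subseteq> {a..b}"
    have "sorted (map h xs)"
      unfolding sorted_iff_nth_mono
    proof (intro allI impI)
      fix i j
      assume "i \<le> j" "j < length (map h xs)"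
      with xs show "map h xs ! i \<le> map h xs ! j"
        by (auto intro!: mono_onD[OF assms(2)] sorted_nth_mono)
    qed
    moreover have "set (map h xs) \<subseteq> {c..d}"
      using xs assms(3) by auto
    ultimately show "(\<Sum>i<length xs - 1. \<bar>f (h (xs ! Suc i)) - f (h (xs ! i))\<bar>) \<le> K"
      using K[of "map h xs"] by simp
  qed
qed

lemma bounded_variation_on_Icc_concat:
  assumes "a \<le> m" "m \<le> b" "bounded_variation_on f a m" "bounded_variation_on f m b"
  shows "bounded_variation_on f a b"
proof -
  have "bounded_variation_on (\<lambda>t. f (min t m)) a b"
    by (rule bounded_variation_on_compose_mono[OF assms(3)]) (auto simp: mono_on_def assms)
  moreover have "bounded_variation_on (\<lambda>t. f (max t m)) a b"
    by (rule bounded_variation_on_compose_mono[OF assms(4)]) (auto simp: mono_on_def assms)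
  then have "bounded_variation_on (\<lambda>t. f (max t m) - f m) a b"
    by (simp add: bounded_variation_on_diff_const)
  ultimately have "bounded_variation_on (\<lambda>t. f (min t m) + (f (max t m) - f m)) a b"
    by (rule bounded_variation_on_add)
  moreover have "(\<lambda>t. f (min t m) + (f (max t m) - f m)) = f"
    by (auto simp: min_def max_def)
  ultimately show ?thesis
    by simp
qed

lemma monotone_on_Icc_concat:
  fixes f :: "'a::linorder \<Rightarrow> 'b"
  assumes "transp ord" "a \<le> m" "m \<le> b"
    and "monotone_on {a..m} (\<le>) ord f" "monotone_on {m..b} (\<le>) ord f"
  shows "monotone_on {a..b} (\<le>) ord f"
proof (rule monotone_onI)
  fix x y
  assume xy: "x \<in> {a..b}" "y \<in> {a..b}" "x \<le> y"
  consider "y \<le> m" | "m \<le> x" | "x \<le> m" "m \<le> y"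
    by fastforce
  then show "ord (f x) (f y)"
  proof cases
    case 1
    with xy show ?thesis by (auto intro: monotone_onD[OF assms(4)])
  next
    case 2
    with xy show ?thesis by (auto intro: monotone_onD[OF assms(5)])
  next
    case 3
    with xy assms(2,3) have "ord (f x) (f m)" "ord (f m) (f y)"
      by (auto intro: monotone_onD[OF assms(4)] monotone_onD[OF assms(5)])
    with assms(1) show ?thesis
      by (rule transpD)
  qed
qed

lemma monotone_on_if_constant:
  assumes "reflp ord" "\<And>x. x \<in> A \<Longrightarrow> f x = k"
  shows "monotone_on A orda ord f"
  using assms by (simp add: monotone_on_def reflpD)

section \<open>Running supremum and drawdown times\<close>

definition running_sup :: "(real \<Rightarrow> real) \<Rightarrow> real \<Rightarrow> real \<Rightarrow> real" where
  "running_sup g a t = Sup (g ` {a..t})"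

locale continuous_from =
  fixes g :: "real \<Rightarrow> real" and a :: real
  assumes continuous: "continuous_on {a..} g"
begin

lemma continuous_on_subdomain: "S \<subseteq> {a..} \<Longrightarrow> continuous_on S g"
  using continuous continuous_on_subset by blast

lemma running_sup_upper: "a \<le> r \<Longrightarrow> r \<le> t \<Longrightarrow> g r \<le> running_sup g a t"
proof -
  assume "a \<le> r" "r \<le> t"
  have "compact (g ` {a..t})"
    by (intro compact_continuous_image continuous_on_subdomain) auto
  then have "bdd_above (g ` {a..t})"
    by (intro bounded_imp_bdd_above compact_imp_bounded)
  with \<open>a \<le> r\<close> \<open>r \<le> t\<close> show ?thesis
    unfolding running_sup_def by (intro cSup_upper) auto
qed

lemma running_sup_least:
  "a \<le> t \<Longrightarrow> (\<And>r. a \<le> r \<Longrightarrow> r \<le> t \<Longrightarrow> g r \<le> K) \<Longrightarrow> running_sup g a t \<le> K"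
  unfolding running_sup_def by (rule cSup_least) auto

lemma running_sup_attained:
  assumes "a \<le> t"
  obtains r where "a \<le> r" "r \<le> t" "running_sup g a t = g r"
proof -
  obtain r where r: "r \<in> {a..t}" "\<And>y. y \<in> {a..t} \<Longrightarrow> g y \<le> g r"
    using continuous_attains_sup[of "{a..t}" g] continuous_on_subdomain assms by auto
  then have "running_sup g a t = g r"
    using assms by (intro antisym running_sup_least running_sup_upper) auto
  with r that show ?thesis by auto
qed

lemma running_sup_start: "running_sup g a a = g a"
  by (intro antisym running_sup_least running_sup_upper) auto

lemma running_sup_mono: "a \<le> t \<Longrightarrow> t \<le> t' \<Longrightarrow> running_sup g a t \<le> running_sup g a t'"
  by (rule running_sup_least) (auto intro: running_sup_upper)

lemma running_sup_diff_le:
  assumes "a \<le> p" "p \<le> q" and near: "\<And>r. p \<le> r \<Longrightarrow> r \<le> q \<Longrightarrow> \<bar>g r - g x\<bar> \<le> e"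
  shows "\<bar>running_sup g a q - running_sup g a p\<bar> \<le> 2 * e"
proof -
  have "running_sup g a q \<le> running_sup g a p + 2 * e"
  proof (rule running_sup_least)
    fix r
    assume "a \<le> r" "r \<le> q"
    have "0 \<le> e" "g p \<le> running_sup g a p"
      using near[of p] assms(1,2) running_sup_upper[of p p] by auto
    then show "g r \<le> running_sup g a p + 2 * e"
      using near[of r] near[of p] running_sup_upper[of r p] \<open>a \<le> r\<close> \<open>r \<le> q\<close> assms(2)
      by (cases "r \<le> p") auto
  qed (use assms in auto)
  moreover have "running_sup g a p \<le> running_sup g a q"
    using assms(1,2) by (rule running_sup_mono)
  ultimately show ?thesis
    by simp
qed

lemma continuous_on_running_sup: "continuous_on {a..} (running_sup g a)"
  unfolding continuous_on_iff
proof (intro ballI allI impI)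
  fix x e :: real
  assume x: "x \<in> {a..}" and e: "0 < e"
  have "e / 3 > 0"
    using e by simp
  with continuous x have "\<exists>d>0. \<forall>y\<in>{a..}. dist y x < d \<longrightarrow> dist (g y) (g x) < e / 3"
    unfolding continuous_on_iff by blast
  then obtain d where d: "d > 0"
    and near: "\<And>y. a \<le> y \<Longrightarrow> \<bar>y - x\<bar> < d \<Longrightarrow> \<bar>g y - g x\<bar> < e / 3"
    by (auto simp: dist_real_def)
  show "\<exists>d>0. \<forall>y\<in>{a..}. dist y x < d \<longrightarrow> dist (running_sup g a y) (running_sup g a x) < e"
  proof (intro exI conjI ballI impI)
    fix y
    assume "y \<in> {a..}" "dist y x < d"
    then have y: "a \<le> y" "\<bar>y - x\<bar> < d"
      by (auto simp: dist_real_def)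
    have "\<bar>running_sup g a (max x y) - running_sup g a (min x y)\<bar> \<le> 2 * (e / 3)"
    proof (rule running_sup_diff_le)
      fix r
      assume "min x y \<le> r" "r \<le> max x y"
      with x y have "a \<le> r" "\<bar>r - x\<bar> < d"
        by (auto simp: min_def max_def abs_if split: if_splits)
      then show "\<bar>g r - g x\<bar> \<le> e / 3"
        using near less_imp_le by blast
    qed (use x y in auto)
    with e show "dist (running_sup g a y) (running_sup g a x) < e"
      by (cases "x \<le> y") (auto simp: dist_real_def min_def max_def abs_minus_commute)
  qed (rule d)
qed

lemma running_sup_stalls:
  assumes "a \<le> s" "s \<le> t" and below: "\<And>r. s \<le> r \<Longrightarrow> r \<le> t \<Longrightarrow> g r < running_sup g a r"
  shows "running_sup g a t = running_sup g a s"
proof -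
  obtain p where p: "s \<le> p" "p \<le> t" and max: "\<And>r. r \<in> {s..t} \<Longrightarrow> g r \<le> g p"
    using continuous_attains_sup[of "{s..t}" g] continuous_on_subdomain assms(1,2) by auto
  have bound: "g r \<le> max (running_sup g a s) (g p)" if "a \<le> r" "r \<le> t" for r
  proof (cases "r \<le> s")
    case True
    with \<open>a \<le> r\<close> have "g r \<le> running_sup g a s"
      by (rule running_sup_upper)
    then show ?thesis by simp
  next
    case False
    with \<open>r \<le> t\<close> have "g r \<le> g p"
      by (intro max) simp
    then show ?thesis by simp
  qed
  have "g p \<le> running_sup g a s"
  proof (rule ccontr)
    assume "\<not> ?thesis"
    moreover have "running_sup g a p \<le> max (running_sup g a s) (g p)"
      using p assms(1) bound by (intro running_sup_least) auto
    ultimately show False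
      using below[OF p] by simp
  qed
  moreover have "running_sup g a t \<le> max (running_sup g a s) (g p)"
    using p assms(1) bound by (intro running_sup_least) auto
  ultimately show ?thesis
    using running_sup_mono[OF assms(1,2)] by simp
qed

end

definition drawdown_time :: "(real \<Rightarrow> real) \<Rightarrow> real \<Rightarrow> real \<Rightarrow> real" where
  "drawdown_time g c a = Inf (drawdown_set g c a)"

locale drawdown_phase = continuous_from +
  fixes c :: real
  assumes c_pos: "c > 0" and drawdown_set_nonempty: "drawdown_set g c a \<noteq> {}"
begin

lemma drawdown_set_eq: "drawdown_set g c a = {t \<in> {a..}. g t - running_sup g a t = - 2 * c}"
  unfolding drawdown_set_def running_sup_def by auto

lemma drawdown_time_mem: "drawdown_time g c a \<in> drawdown_set g c a"
proof -
  have "closed (drawdown_set g c a)"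
    unfolding drawdown_set_eq
    by (intro continuous_closed_preimage_constant continuous_intros
        continuous continuous_on_running_sup)
  moreover have "bdd_below (drawdown_set g c a)"
    unfolding drawdown_set_def by (auto intro: bdd_belowI)
  ultimately show ?thesis
    unfolding drawdown_time_def using closed_contains_Inf drawdown_set_nonempty by blast
qed

lemma drawdown_time_gap: "g (drawdown_time g c a) - running_sup g a (drawdown_time g c a) = - 2 * c"
  using drawdown_time_mem unfolding drawdown_set_eq by auto

lemma start_less_drawdown_time: "a < drawdown_time g c a"
proof -
  have "drawdown_time g c a \<noteq> a"
    using drawdown_time_gap running_sup_start c_pos by auto
  with drawdown_time_mem show ?thesis
    unfolding drawdown_set_def by auto
qed

lemma drawdown_time_least: "t \<in> drawdown_set g c a \<Longrightarrow> drawdown_time g c a \<le> t"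
  unfolding drawdown_time_def
  by (rule cInf_lower) (auto simp: drawdown_set_def intro: bdd_belowI)

lemma gap_before_drawdown_time:
  assumes "a \<le> t" "t \<le> drawdown_time g c a"
  shows "- 2 * c \<le> g t - running_sup g a t"
proof (rule ccontr)
  assume "\<not> ?thesis"
  moreover have "continuous_on {a..t} (\<lambda>t. g t - running_sup g a t)"
    by (intro continuous_intros continuous_on_subdomain
        continuous_on_subset[OF continuous_on_running_sup]) auto
  ultimately obtain x where x: "a \<le> x" "x \<le> t" "g x - running_sup g a x = - 2 * c"
    using IVT2'[of "\<lambda>t. g t - running_sup g a t" t "- 2 * c" a] running_sup_start c_pos assms(1)
    by auto
  then have "drawdown_time g c a \<le> x"
    by (intro drawdown_time_least) (auto simp: drawdown_set_eq)
  with x assms have "x = t"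
    by simp
  with x \<open>\<not> ?thesis\<close> show False
    by simp
qed

lemma drawdown_oscillation:
  obtains r where "a \<le> r" "r \<le> drawdown_time g c a" "g r - g (drawdown_time g c a) = 2 * c"
proof -
  obtain r where "a \<le> r" "r \<le> drawdown_time g c a"
      and "running_sup g a (drawdown_time g c a) = g r"
    using running_sup_attained start_less_drawdown_time less_imp_le by blast
  with drawdown_time_gap that show ?thesis
    by simp
qed

end

section \<open>The process along a path\<close>

lemma drawup_set_eq_drawdown_set_uminus:
  "drawup_set b c s = drawdown_set (\<lambda>t. - b t) c s"
  unfolding drawup_set_def drawdown_set_def Inf_real_def image_image by auto

locale play_path =
  fixes b :: "real \<Rightarrow> real" and c :: real
  assumes continuous: "continuous_on {0..} b" and start_zero: "b 0 = 0" and c_pos: "c > 0"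
    and finite_times: "T_finite b c"
begin

definition first_level :: real where
  "first_level = (if reaches_c_first b c then c else - c)"

definition rising :: "nat \<Rightarrow> bool" where
  "rising m \<longleftrightarrow> (even m = reaches_c_first b c)"

definition signed_path :: "nat \<Rightarrow> real \<Rightarrow> real" where
  "signed_path m = (if rising m then b else (\<lambda>t. - b t))"

definition phase_U :: "nat \<Rightarrow> real \<Rightarrow> real" where
  "phase_U m t =
     (if rising m then running_sup (signed_path m) (T b c m) t - c
      else c - running_sup (signed_path m) (T b c m) t)"

lemma rising_Suc: "rising (Suc m) \<longleftrightarrow> \<not> rising m"
  unfolding rising_def by auto

lemma T_Suc: "T b c (Suc m) = drawdown_time (signed_path m) c (T b c m)"
  by (simp add: T_def signed_path_def rising_def drawdown_time_def
      drawup_set_eq_drawdown_set_uminus)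

lemma T_0_mem: "T b c 0 \<in> hit_set b first_level"
proof -
  have "hit_set b first_level = {t \<in> {0..}. b t = first_level}"
    unfolding hit_set_def by auto
  then have "closed (hit_set b first_level)"
    using continuous_closed_preimage_constant[OF continuous] by simp
  moreover have "bdd_below (hit_set b first_level)"
    unfolding hit_set_def by (auto intro: bdd_belowI)
  moreover have "hit_set b first_level \<noteq> {}"
    using finite_times unfolding T_finite_def Let_def first_level_def by meson
  ultimately have "Inf (hit_set b first_level) \<in> hit_set b first_level"
    by (intro closed_contains_Inf)
  then show ?thesis
    by (simp add: T_def first_level_def)
qed

lemma T_0_least: "0 \<le> t \<Longrightarrow> b t = first_level \<Longrightarrow> T b c 0 \<le> t"
  unfolding T_def Tseq.simps first_level_def
  by (rule cInf_lower) (auto simp: hit_set_def intro: bdd_belowI)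

lemma drawdown_phase_if_nonneg: "0 \<le> T b c m \<Longrightarrow> drawdown_phase (signed_path m) (T b c m) c"
proof unfold_locales
  assume "0 \<le> T b c m"
  have "continuous_on {0..} (signed_path m)"
    unfolding signed_path_def using continuous by (auto intro: continuous_intros)
  then show "continuous_on {T b c m..} (signed_path m)"
    by (rule continuous_on_subset) (use \<open>0 \<le> T b c m\<close> in auto)
  have "(if even m = reaches_c_first b c then drawdown_set b c (T b c m)
        else drawup_set b c (T b c m)) \<noteq> {}"
    using finite_times unfolding T_finite_def Let_def by meson
  then show "drawdown_set (signed_path m) c (T b c m) \<noteq> {}"
    by (simp add: signed_path_def rising_def drawup_set_eq_drawdown_set_uminus split: if_splits)
qed (rule c_pos)

lemma T_nonneg: "0 \<le> T b c m"
proof (induction m)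
  case 0
  show ?case
    using T_0_mem unfolding hit_set_def by simp
next
  case (Suc m)
  then show ?case
    using drawdown_phase.start_less_drawdown_time[OF drawdown_phase_if_nonneg] T_Suc
    by (metis less_imp_le order_trans)
qed

lemma drawdown_phase: "drawdown_phase (signed_path m) (T b c m) c"
  using drawdown_phase_if_nonneg T_nonneg by blast

lemma strict_mono_T: "strict_mono (T b c)"
  unfolding strict_mono_Suc_iff
  using drawdown_phase.start_less_drawdown_time[OF drawdown_phase] T_Suc by simp

lemma phase_oscillation:
  obtains r where "T b c m \<le> r" "r \<le> T b c (Suc m)" "\<bar>b r - b (T b c (Suc m))\<bar> = 2 * c"
proof -
  interpret P: drawdown_phase "signed_path m" "T b c m" c
    by (rule drawdown_phase)
  obtain r where "T b c m \<le> r" "r \<le> T b c (Suc m)"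
      and "signed_path m r - signed_path m (T b c (Suc m)) = 2 * c"
    using P.drawdown_oscillation T_Suc by metis
  with that c_pos show ?thesis
    by (auto simp: signed_path_def split: if_splits)
qed

lemma T_unbounded: "\<exists>n. t < T b c n"
proof (rule ccontr)
  assume "\<nexists>n. t < T b c n"
  then have bdd: "bdd_above (range (T b c))"
    by (auto intro: bdd_aboveI[of _ t] simp: not_less)
  define L where "L = (SUP n. T b c n)"
  have lim: "T b c \<longlonglongrightarrow> L"
    unfolding L_def using bdd strict_mono_T
    by (intro LIMSEQ_incseq_SUP) (auto simp: incseq_def strict_mono_less_eq)
  have le_L: "T b c n \<le> L" for n
    unfolding L_def using bdd by (rule cSUP_upper[OF UNIV_I])
  then have "0 \<le> L"
    using T_nonneg order_trans by blast
  with continuous c_pos have "\<exists>d>0. \<forall>y\<in>{0..}. dist y L < d \<longrightarrow> dist (b y) (b L) < c"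
    unfolding continuous_on_iff by blast
  then obtain d where "d > 0" and near: "\<And>y. 0 \<le> y \<Longrightarrow> \<bar>y - L\<bar> < d \<Longrightarrow> \<bar>b y - b L\<bar> < c"
    by (auto simp: dist_real_def)
  then obtain N where N: "\<And>n. n \<ge> N \<Longrightarrow> L - d < T b c n"
    using order_tendstoD(1)[OF lim, of "L - d"] unfolding eventually_sequentially by auto
  obtain r where r: "T b c N \<le> r" "r \<le> T b c (Suc N)" "\<bar>b r - b (T b c (Suc N))\<bar> = 2 * c"
    by (rule phase_oscillation)
  have "\<bar>b r - b L\<bar> < c"
    using r N[of N] le_L[of "Suc N"] T_nonneg[of N] by (intro near) auto
  moreover have "\<bar>b (T b c (Suc N)) - b L\<bar> < c"
    using N[of "Suc N"] le_L[of "Suc N"] T_nonneg[of "Suc N"] by (intro near) auto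
  ultimately show False
    using r(3) by linarith
qed

lemma phase_exists:
  assumes "T b c 0 < t"
  obtains m where "T b c m < t" "t \<le> T b c (Suc m)"
proof -
  obtain n where "t < T b c n"
    using T_unbounded by blast
  have "\<exists>m. T b c m < t \<and> t \<le> T b c (Suc m)" if "t \<le> T b c n" for n
    using that
  proof (induction n)
    case 0
    with assms show ?case by simp
  next
    case (Suc n)
    then show ?case
      by (cases "t \<le> T b c n") (auto simp: not_le)
  qed
  with \<open>t < T b c n\<close> that show ?thesis
    by (meson less_imp_le)
qed

lemma phase_unique:
  assumes "T b c m < t" "t \<le> T b c (Suc m)" "T b c m' < t" "t \<le> T b c (Suc m')"
  shows "m' = m"
proof -
  have "\<not> m < m'" "\<not> m' < m"
    using assms strict_mono_less_eq[OF strict_mono_T] by (metis Suc_leI not_le order_trans)+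
  then show ?thesis by simp
qed

lemma T_0_le_exit_time:
  assumes "0 \<le> x" "\<bar>b x\<bar> = c"
  shows "T b c 0 \<le> x"
proof (cases "reaches_c_first b c")
  case True
  then obtain t where t: "0 \<le> t" "b t = c" "\<forall>s\<in>{0..t}. b s \<noteq> - c"
    unfolding reaches_c_first_def by blast
  have "T b c 0 \<le> t"
    using t True by (intro T_0_least) (auto simp: first_level_def)
  moreover have "b x = c \<or> t < x"
    using assms t by force
  ultimately show ?thesis
    using assms(1) True T_0_least[of x] by (auto simp: first_level_def)
next
  case False
  have no_minus: "\<forall>s\<in>{0..x}. b s \<noteq> - c" if "x < T b c 0"
  proof (intro ballI notI)
    fix s
    assume "s \<in> {0..x}" "b s = - c"
    with False have "T b c 0 \<le> s"
      by (intro T_0_least) (auto simp: first_level_def)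
    with \<open>s \<in> {0..x}\<close> that show False
      by simp
  qed
  show ?thesis
  proof (rule ccontr)
    assume "\<not> ?thesis"
    with no_minus assms(1) have "b x \<noteq> - c"
      by simp
    with assms(2) have "b x = c"
      by (cases "b x \<ge> 0") auto
    with no_minus \<open>\<not> ?thesis\<close> assms(1) have "reaches_c_first b c"
      unfolding reaches_c_first_def by auto
    with False show False
      by simp
  qed
qed

lemma abs_le_before_T_0:
  assumes "0 \<le> t" "t \<le> T b c 0"
  shows "\<bar>b t\<bar> \<le> c"
proof (rule ccontr)
  assume exceeds: "\<not> ?thesis"
  have "continuous_on {0..t} b"
    using continuous by (rule continuous_on_subset) auto
  with exceeds assms(1) start_zero c_pos obtain x where x: "0 \<le> x" "x \<le> t" "\<bar>b x\<bar> = c"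
    using IVT'[of b 0 c t] IVT2'[of b t "- c" 0] by (cases "b t > c") force+
  with exceeds have "x < t"
    by (cases "x = t") auto
  with T_0_le_exit_time[OF x(1,3)] assms(2) show False
    by simp
qed

lemma U_before_T_0: "t \<le> T b c 0 \<Longrightarrow> U b c t = 0"
  unfolding U_def by simp

lemma U_eq_phase_U_interior:
  assumes "T b c m < t" "t \<le> T b c (Suc m)"
  shows "U b c t = phase_U m t"
proof -
  have "T b c 0 \<le> T b c m"
    using strict_mono_less_eq[OF strict_mono_T] by simp
  with assms(1) have "\<not> t \<le> T b c 0"
    by simp
  moreover have "(THE m. T b c m < t \<and> t \<le> T b c (Suc m)) = m"
    using assms phase_unique by blast
  ultimately show ?thesis
    unfolding U_def
    by (simp add: phase_U_def signed_path_def rising_def running_sup_def Inf_real_def image_image)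
qed

lemma phase_U_start:
  "phase_U m (T b c m) = (if rising m then b (T b c m) - c else b (T b c m) + c)"
proof -
  interpret P: drawdown_phase "signed_path m" "T b c m" c
    by (rule drawdown_phase)
  show ?thesis
    using P.running_sup_start by (cases "rising m") (simp_all add: phase_U_def signed_path_def)
qed

lemma phase_U_end:
  "phase_U m (T b c (Suc m)) =
     (if rising m then b (T b c (Suc m)) + c else b (T b c (Suc m)) - c)"
proof -
  interpret P: drawdown_phase "signed_path m" "T b c m" c
    by (rule drawdown_phase)
  show ?thesis
    using P.drawdown_time_gap
    by (cases "rising m") (simp_all add: phase_U_def signed_path_def T_Suc algebra_simps)
qed

lemma U_eq_phase_U:
  assumes "T b c m \<le> t" "t \<le> T b c (Suc m)"
  shows "U b c t = phase_U m t"
proof (cases "t = T b c m")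
  case True
  show ?thesis
  proof (cases m)
    case 0
    have "b (T b c 0) = first_level"
      using T_0_mem unfolding hit_set_def by simp
    with True 0 show ?thesis
      by (simp add: U_before_T_0 phase_U_start rising_def first_level_def)
  next
    case (Suc k)
    have "U b c t = phase_U k t"
      using True Suc strict_mono_T by (intro U_eq_phase_U_interior) (auto simp: strict_mono_def)
    with True Suc show ?thesis
      by (simp add: phase_U_start phase_U_end rising_Suc)
  qed
next
  case False
  with assms show ?thesis
    by (intro U_eq_phase_U_interior) auto
qed

lemma continuous_on_U_phase: "continuous_on {T b c m..T b c (Suc m)} (U b c)"
proof -
  interpret P: drawdown_phase "signed_path m" "T b c m" c
    by (rule drawdown_phase)
  have "continuous_on {T b c m..T b c (Suc m)} (running_sup (signed_path m) (T b c m))"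
    by (rule continuous_on_subset[OF P.continuous_on_running_sup]) auto
  then have "continuous_on {T b c m..T b c (Suc m)} (phase_U m)"
    unfolding phase_U_def by (cases "rising m") (auto intro!: continuous_intros)
  then show ?thesis
    by (rule continuous_on_eq) (auto simp: U_eq_phase_U)
qed

lemma U_bounds_phase:
  assumes "T b c m \<le> t" "t \<le> T b c (Suc m)"
  shows "b t - c \<le> U b c t \<and> U b c t \<le> b t + c"
proof -
  interpret P: drawdown_phase "signed_path m" "T b c m" c
    by (rule drawdown_phase)
  have "- 2 * c \<le> signed_path m t - running_sup (signed_path m) (T b c m) t"
    using assms by (intro P.gap_before_drawdown_time) (simp_all add: T_Suc)
  moreover have "signed_path m t \<le> running_sup (signed_path m) (T b c m) t"
    using assms(1) by (rule P.running_sup_upper) simp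
  ultimately show ?thesis
    using U_eq_phase_U[OF assms]
    by (auto simp: phase_U_def signed_path_def split: if_splits)
qed

lemma U_mono_on_rising_phase:
  assumes "rising m"
  shows "mono_on {T b c m..T b c (Suc m)} (U b c)"
proof (rule mono_onI)
  interpret P: drawdown_phase "signed_path m" "T b c m" c
    by (rule drawdown_phase)
  fix r s
  assume "r \<in> {T b c m..T b c (Suc m)}" "s \<in> {T b c m..T b c (Suc m)}" "r \<le> s"
  moreover from this have "U b c r = phase_U m r" "U b c s = phase_U m s"
    by (simp_all add: U_eq_phase_U)
  ultimately show "U b c r \<le> U b c s"
    using assms P.running_sup_mono[of r s] by (simp add: phase_U_def)
qed

lemma U_antimono_on_falling_phase:
  assumes "\<not> rising m"
  shows "antimono_on {T b c m..T b c (Suc m)} (U b c)"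
proof (rule monotone_onI)
  interpret P: drawdown_phase "signed_path m" "T b c m" c
    by (rule drawdown_phase)
  fix r s
  assume "r \<in> {T b c m..T b c (Suc m)}" "s \<in> {T b c m..T b c (Suc m)}" "r \<le> s"
  moreover from this have "U b c r = phase_U m r" "U b c s = phase_U m s"
    by (simp_all add: U_eq_phase_U)
  ultimately show "U b c s \<le> U b c r"
    using assms P.running_sup_mono[of r s] by (simp add: phase_U_def)
qed

lemma U_stalls_phase:
  assumes "T b c m \<le> s" "s \<le> r" "r \<le> t" "t \<le> T b c (Suc m)"
    and off_barrier: "\<And>q. s \<le> q \<Longrightarrow> q \<le> t \<Longrightarrow>
      (if rising m then b q - c < U b c q else U b c q < b q + c)"
  shows "U b c r = U b c s"
proof -
  interpret P: drawdown_phase "signed_path m" "T b c m" c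
    by (rule drawdown_phase)
  have "signed_path m q < running_sup (signed_path m) (T b c m) q" if "s \<le> q" "q \<le> t" for q
    using off_barrier[OF that] U_eq_phase_U[of m q] that assms(1,4)
    by (auto simp: phase_U_def signed_path_def split: if_splits)
  then have "running_sup (signed_path m) (T b c m) r = running_sup (signed_path m) (T b c m) s"
    using assms(1-3) by (intro P.running_sup_stalls) auto
  moreover have "U b c r = phase_U m r" "U b c s = phase_U m s"
    using assms(1-4) by (intro U_eq_phase_U; linarith)+
  ultimately show ?thesis
    by (simp add: phase_U_def)
qed

lemma U_mono_on_phase_below_upper:
  assumes "T b c m \<le> s" "t \<le> T b c (Suc m)" "\<forall>r\<in>{s..t}. U b c r < b r + c"
  shows "mono_on {s..t} (U b c)"
proof (cases "rising m")
  case True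
  with assms(1,2) show ?thesis
    by (intro monotone_on_subset[OF U_mono_on_rising_phase]) auto
next
  case False
  have const: "U b c r = U b c s" if "s \<le> r" "r \<le> t" for r
  proof (rule U_stalls_phase[OF assms(1) that assms(2)])
    fix q
    assume "s \<le> q" "q \<le> t"
    with assms(3) False show "if rising m then b q - c < U b c q else U b c q < b q + c"
      by simp
  qed
  show ?thesis
  proof (rule monotone_on_if_constant[OF reflp_on_le])
    fix x
    assume "x \<in> {s..t}"
    then show "U b c x = U b c s"
      using const[of x] by simp
  qed
qed

lemma U_antimono_on_phase_above_lower:
  assumes "T b c m \<le> s" "t \<le> T b c (Suc m)" "\<forall>r\<in>{s..t}. b r - c < U b c r"
  shows "antimono_on {s..t} (U b c)"
proof (cases "rising m")
  case False
  with assms(1,2) show ?thesis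
    by (intro monotone_on_subset[OF U_antimono_on_falling_phase]) auto
next
  case True
  have const: "U b c r = U b c s" if "s \<le> r" "r \<le> t" for r
  proof (rule U_stalls_phase[OF assms(1) that assms(2)])
    fix q
    assume "s \<le> q" "q \<le> t"
    with assms(3) True show "if rising m then b q - c < U b c q else U b c q < b q + c"
      by simp
  qed
  show ?thesis
  proof (rule monotone_on_if_constant[OF reflp_on_ge])
    fix x
    assume "x \<in> {s..t}"
    then show "U b c x = U b c s"
      using const[of x] by simp
  qed
qed

lemma Icc_property_from_phases:
  assumes initial: "\<And>s t. 0 \<le> s \<Longrightarrow> t \<le> T b c 0 \<Longrightarrow> P s t"
    and phase: "\<And>m s t. T b c m \<le> s \<Longrightarrow> t \<le> T b c (Suc m) \<Longrightarrow> P s t"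
    and concat: "\<And>s r t. s \<le> r \<Longrightarrow> r \<le> t \<Longrightarrow> P s r \<Longrightarrow> P r t \<Longrightarrow> P s t"
    and "0 \<le> s"
  shows "P s t"
proof -
  have "P s t" if "0 \<le> s" "t \<le> T b c n" for n s t
    using that
  proof (induction n arbitrary: s t)
    case 0
    then show ?case
      by (rule initial)
  next
    case (Suc n)
    consider "t \<le> T b c n" | "T b c n \<le> s" | "s \<le> T b c n" "T b c n \<le> t"
      by (metis linear)
    then show ?case
    proof cases
      case 1
      with Suc show ?thesis by blast
    next
      case 2
      with Suc.prems(2) show ?thesis by (intro phase)
    next
      case 3
      moreover have "P s (T b c n)"
        using Suc by blast
      moreover have "P (T b c n) t"
        using Suc.prems(2) by (rule phase[OF order_refl])
      ultimately show ?thesis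
        by (rule concat)
    qed
  qed
  moreover obtain n where "t < T b c n"
    using T_unbounded by blast
  ultimately show ?thesis
    using \<open>0 \<le> s\<close> less_imp_le by blast
qed

lemma continuous_on_U: "continuous_on {0..} (U b c)"
proof -
  have on_Icc: "continuous_on {0..t} (U b c)" for t
  proof (rule Icc_property_from_phases[where P = "\<lambda>s t. continuous_on {s..t} (U b c)"])
    fix s t
    assume "t \<le> T b c 0"
    then show "continuous_on {s..t} (U b c)"
      by (intro continuous_on_eq[OF continuous_on_const]) (auto simp: U_before_T_0)
  next
    fix m s t
    assume "T b c m \<le> s" "t \<le> T b c (Suc m)"
    then show "continuous_on {s..t} (U b c)"
      by (intro continuous_on_subset[OF continuous_on_U_phase]) auto
  next
    fix s r t
    assume "s \<le> r" "r \<le> t" "continuous_on {s..r} (U b c)" "continuous_on {r..t} (U b c)"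
    then show "continuous_on {s..t} (U b c)"
      using continuous_on_closed_Un[of "{s..r}" "{r..t}" "U b c"] ivl_disj_un_two_touch(4)
      by fastforce
  qed simp
  show ?thesis
    unfolding continuous_on_eq_continuous_within
  proof
    fix x :: real
    assume "x \<in> {0..}"
    obtain n where "x < T b c n"
      using T_unbounded by blast
    then have "at x within {0..} = at x within {0..T b c n}"
      by (intro at_within_nhd[of x "{..<T b c n}"]) auto
    moreover have "continuous (at x within {0..T b c n}) (U b c)"
      using on_Icc[of "T b c n"] \<open>x \<in> {0..}\<close> \<open>x < T b c n\<close>
      unfolding continuous_on_eq_continuous_within by auto
    ultimately show "continuous (at x within {0..}) (U b c)"
      by simp
  qed
qed

lemma finite_variation_U: "finite_variation (U b c)"
  unfolding finite_variation_def
proof (intro allI impI)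
  fix t :: real
  show "bounded_variation_on (U b c) 0 t"
  proof (rule Icc_property_from_phases[where P = "\<lambda>s t. bounded_variation_on (U b c) s t"])
    fix s t
    assume "t \<le> T b c 0"
    then have "mono_on {s..t} (U b c)"
      by (intro monotone_on_if_constant[of _ _ _ 0]) (simp_all add: U_before_T_0)
    then show "bounded_variation_on (U b c) s t"
      by (rule mono_on_imp_bounded_variation_on)
  next
    fix m s t
    assume "T b c m \<le> s" "t \<le> T b c (Suc m)"
    have "bounded_variation_on (U b c) (T b c m) (T b c (Suc m))"
    proof (cases "rising m")
      case True
      then show ?thesis
        by (intro mono_on_imp_bounded_variation_on U_mono_on_rising_phase)
    next
      case False
      then show ?thesis
        by (intro antimono_on_imp_bounded_variation_on U_antimono_on_falling_phase)
    qed
    then show "bounded_variation_on (U b c) s t"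
      by (rule bounded_variation_on_subinterval) fact+
  next
    fix s r t
    assume "s \<le> r" "r \<le> t" "bounded_variation_on (U b c) s r" "bounded_variation_on (U b c) r t"
    then show "bounded_variation_on (U b c) s t"
      by (rule bounded_variation_on_Icc_concat)
  qed simp
qed

lemma U_bounds:
  assumes "0 \<le> t"
  shows "b t - c \<le> U b c t \<and> U b c t \<le> b t + c"
proof (cases "t \<le> T b c 0")
  case True
  then show ?thesis
    using abs_le_before_T_0[OF assms True] U_before_T_0 by auto
next
  case False
  then have "T b c 0 < t"
    by simp
  then obtain m where "T b c m < t" "t \<le> T b c (Suc m)"
    by (rule phase_exists)
  then show ?thesis
    using U_bounds_phase by (meson less_imp_le)
qed

lemma monotone_on_U_from_phases:
  assumes "0 \<le> s" "transp ord" "reflp ord" "\<forall>r\<in>{s..t}. Q r"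
    and phase: "\<And>m s t. T b c m \<le> s \<Longrightarrow> t \<le> T b c (Suc m) \<Longrightarrow> \<forall>r\<in>{s..t}. Q r \<Longrightarrow>
      monotone_on {s..t} (\<le>) ord (U b c)"
  shows "monotone_on {s..t} (\<le>) ord (U b c)"
proof -
  have "(\<forall>r\<in>{s..t}. Q r) \<longrightarrow> monotone_on {s..t} (\<le>) ord (U b c)"
  proof (rule Icc_property_from_phases[where
        P = "\<lambda>s t. (\<forall>r\<in>{s..t}. Q r) \<longrightarrow> monotone_on {s..t} (\<le>) ord (U b c)"])
    fix s t
    assume "t \<le> T b c 0"
    with assms(3) show "(\<forall>r\<in>{s..t}. Q r) \<longrightarrow> monotone_on {s..t} (\<le>) ord (U b c)"
      by (auto intro!: monotone_on_if_constant[of _ _ _ 0] simp: U_before_T_0)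
  next
    fix m s t
    assume "T b c m \<le> s" "t \<le> T b c (Suc m)"
    then show "(\<forall>r\<in>{s..t}. Q r) \<longrightarrow> monotone_on {s..t} (\<le>) ord (U b c)"
      using phase by blast
  next
    fix s r t
    assume "s \<le> r" "r \<le> t"
      and left: "(\<forall>q\<in>{s..r}. Q q) \<longrightarrow> monotone_on {s..r} (\<le>) ord (U b c)"
      and right: "(\<forall>q\<in>{r..t}. Q q) \<longrightarrow> monotone_on {r..t} (\<le>) ord (U b c)"
    show "(\<forall>q\<in>{s..t}. Q q) \<longrightarrow> monotone_on {s..t} (\<le>) ord (U b c)"
    proof
      assume "\<forall>q\<in>{s..t}. Q q"
      with \<open>s \<le> r\<close> \<open>r \<le> t\<close> have "\<forall>q\<in>{s..r}. Q q" "\<forall>q\<in>{r..t}. Q q"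
        by auto
      with left right have "monotone_on {s..r} (\<le>) ord (U b c)" "monotone_on {r..t} (\<le>) ord (U b c)"
        by blast+
      with assms(2) \<open>s \<le> r\<close> \<open>r \<le> t\<close> show "monotone_on {s..t} (\<le>) ord (U b c)"
        by (rule monotone_on_Icc_concat)
    qed
  qed (rule assms(1))
  with assms(4) show ?thesis
    by blast
qed

lemma play_props_U: "play_props b c (U b c)"
proof -
  have "mono_on {s..t} (U b c)" if "0 \<le> s" "\<forall>r\<in>{s..t}. U b c r < b r + c" for s t
    using that(1) transp_on_le reflp_on_le that(2) U_mono_on_phase_below_upper
    by (rule monotone_on_U_from_phases)
  moreover have "antimono_on {s..t} (U b c)" if "0 \<le> s" "\<forall>r\<in>{s..t}. b r - c < U b c r" for s t
    using that(1) transp_on_ge reflp_on_ge that(2) U_antimono_on_phase_above_lower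
    by (rule monotone_on_U_from_phases)
  moreover have "U b c 0 = 0"
    using U_before_T_0[OF T_nonneg] .
  ultimately show ?thesis
    unfolding play_props_def using continuous_on_U finite_variation_U U_bounds by blast
qed

end

section \<open>Uniqueness\<close>

lemma left_endpoint_le_if_continuous_on:
  fixes f :: "real \<Rightarrow> real"
  assumes "s < t" "continuous_on {s..t} f" "\<And>r. s < r \<Longrightarrow> r \<le> t \<Longrightarrow> f r \<le> K"
  shows "f s \<le> K"
proof (rule tendsto_upperbound)
  have "(f \<longlongrightarrow> f s) (at s within {s..t})"
    using assms(1,2) by (simp add: continuous_on_def)
  then show "(f \<longlongrightarrow> f s) (at s within {s<..t})"
    by (rule tendsto_within_subset) auto
  show "\<forall>\<^sub>F r in at s within {s<..t}. f r \<le> K"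
    using assms(3) by (simp add: eventually_at_filter)
  show "at s within {s<..t} \<noteq> bot"
    using assms(1) by (simp add: at_within_eq_bot_iff closure_greaterThanAtMost)
qed

lemma last_nonpositive_time:
  fixes f :: "real \<Rightarrow> real"
  assumes "a \<le> t" "continuous_on {a..t} f" "f a \<le> 0" "0 < f t"
  obtains s where "a \<le> s" "s < t" "f s \<le> 0" "\<And>r. s < r \<Longrightarrow> r \<le> t \<Longrightarrow> 0 < f r"
proof -
  define S where "S = {a..t} \<inter> f -` {..0}"
  have "closed S"
    unfolding S_def using assms(2) by (rule continuous_closed_preimage) auto
  moreover have "a \<in> S" "bdd_above S"
    using assms unfolding S_def by (auto intro: bdd_aboveI[of _ t])
  ultimately have "Sup S \<in> S"
    using closed_contains_Sup by blast
  moreover have "a \<le> Sup S"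
    using \<open>a \<in> S\<close> \<open>bdd_above S\<close> by (rule cSup_upper)
  moreover have "0 < f r" if "Sup S < r" "r \<le> t" for r
  proof (rule ccontr)
    assume "\<not> 0 < f r"
    with that \<open>a \<le> Sup S\<close> have "r \<in> S"
      unfolding S_def by auto
    then have "r \<le> Sup S"
      using \<open>bdd_above S\<close> by (rule cSup_upper)
    with that show False
      by simp
  qed
  moreover have "Sup S \<noteq> t"
    using \<open>Sup S \<in> S\<close> assms(4) unfolding S_def by auto
  ultimately show ?thesis
    using that unfolding S_def by force
qed

text \<open>Comparison principle: after the last time \<open>s\<close> before \<open>t\<close> with \<open>W s \<le> V s\<close>, we have
  \<open>V < W\<close>, so \<open>V\<close> stays below its upper barrier and can only increase, while \<open>W\<close> stays
  above its lower barrier and can only decrease; continuity at \<open>s\<close> then contradicts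
  \<open>V t < W t\<close>.\<close>

lemma play_props_le:
  assumes V: "play_props b c V" and W: "play_props b c W" and "0 \<le> t"
  shows "W t \<le> V t"
proof (rule ccontr)
  assume "\<not> W t \<le> V t"
  from V have V_cont: "continuous_on {0..t} V" and "V 0 = 0"
    and V_lower: "\<And>r. 0 \<le> r \<Longrightarrow> b r - c \<le> V r"
    and V_mono: "\<And>s t. 0 \<le> s \<Longrightarrow> \<forall>r\<in>{s..t}. V r < b r + c \<Longrightarrow> mono_on {s..t} V"
    unfolding play_props_def by (auto intro: continuous_on_subset)
  from W have W_cont: "continuous_on {0..t} W" and "W 0 = 0"
    and W_upper: "\<And>r. 0 \<le> r \<Longrightarrow> W r \<le> b r + c"
    and W_antimono: "\<And>s t. 0 \<le> s \<Longrightarrow> \<forall>r\<in>{s..t}. b r - c < W r \<Longrightarrow> antimono_on {s..t} W"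
    unfolding play_props_def by (auto intro: continuous_on_subset)
  obtain s where s: "0 \<le> s" "s < t" "W s - V s \<le> 0"
    and apart: "\<And>r. s < r \<Longrightarrow> r \<le> t \<Longrightarrow> 0 < W r - V r"
  proof (rule last_nonpositive_time[of 0 t "\<lambda>r. W r - V r"])
    show "continuous_on {0..t} (\<lambda>r. W r - V r)"
      using V_cont W_cont by (intro continuous_intros)
  qed (use \<open>0 \<le> t\<close> \<open>V 0 = 0\<close> \<open>W 0 = 0\<close> \<open>\<not> W t \<le> V t\<close> in auto)
  have V_below: "V r \<le> V t" and W_above: "- W r \<le> - W t" if "s < r" "r \<le> t" for r
  proof -
    have "V q < b q + c" "b q - c < W q" if "r \<le> q" "q \<le> t" for q
      using apart[of q] V_lower[of q] W_upper[of q] that \<open>s < r\<close> s(1) by simp_all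
    then have "mono_on {r..t} V" "antimono_on {r..t} W"
      using that s(1) by (simp_all add: V_mono W_antimono)
    then show "V r \<le> V t" "- W r \<le> - W t"
      using that monotone_onD[of "{r..t}" "(\<le>)" "(\<le>)" V r t]
        monotone_onD[of "{r..t}" "(\<le>)" "(\<ge>)" W r t]
      by simp_all
  qed
  have "continuous_on {s..t} V" "continuous_on {s..t} (\<lambda>r. - W r)"
    using V_cont W_cont s(1) by (auto intro!: continuous_intros intro: continuous_on_subset)
  then have "V s \<le> V t" "- W s \<le> - W t"
    using left_endpoint_le_if_continuous_on[OF \<open>s < t\<close>] V_below W_above by blast+
  with s(3) \<open>\<not> W t \<le> V t\<close> show False
    by simp
qed

lemma play_props_unique:
  assumes "play_props b c V" "play_props b c W" "0 \<le> t"
  shows "V t = W t"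
  using play_props_le[OF assms] play_props_le[OF assms(2,1,3)] by simp

theorem proposition2p1:
  fixes M :: "'a measure" and B :: "real \<Rightarrow> 'a \<Rightarrow> real" and c :: real
  assumes "prob_space M"
    and "c > 0"
    and "AE \<omega> in M. continuous_on {0..} (\<lambda>t. B t \<omega>) \<and> B 0 \<omega> = 0"
    and "AE \<omega> in M. T_finite (\<lambda>t. B t \<omega>) c"
  shows "AE \<omega> in M. play_props (\<lambda>t. B t \<omega>) c (U (\<lambda>t. B t \<omega>) c) \<and>
           (\<forall>V. play_props (\<lambda>t. B t \<omega>) c V \<longrightarrow> (\<forall>t\<ge>0. V t = U (\<lambda>t. B t \<omega>) c t))"
  using assms(3,4)
proof eventually_elim
  case (elim \<omega>)
  interpret P: play_path "\<lambda>t. B t \<omega>" c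
    using elim assms(2) by unfold_locales auto
  show ?case
    using P.play_props_U play_props_unique[OF _ P.play_props_U] by simp
qed

end
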